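(* Let $A$ be a $p\times p$ positive-semidefinite matrix. If $K_1(A)/K_2(A)\to0$ as $m\to\infty$, then $K_1(A)/\{\Delta(A)\}^2\to0$ as $m\to\infty$.
   Context: Two populations on $\mathbb{R}^p$ have mean vectors $\mu_1,\mu_2$ and positive-definite covariance matrices $\Sigma_1,\Sigma_2$; sample sizes $n_1,n_2\ge4$. Let $\mu_A=A^{1/2}(\mu_1-\mu_2)$, $\Sigma_{i,A}=A^{1/2}\Sigma_iA^{1/2}$, $\Delta(A)=\|\mu_A\|^2$, $K_1(A)=2\sum_{i=1}^2\mathrm{tr}(\Sigma_{i,A}^2)/\{n_i(n_i-1)\}+4\mathrm{tr}(\Sigma_{1,A}\Sigma_{2,A})/(n_1n_2)$, $K_2(A)=4\sum_{i=1}^2\mu_A^T\Sigma_{i,A}\mu_A/n_i$. All quantities may depend on $p,n_1,n_2$; $m=\min\{p,\min(n_1,n_2)\}$. *)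

theory Defs
  imports Complex_Main "Jordan_Normal_Form.Matrix"
begin

definition mtrace :: "real mat \<Rightarrow> real" where
  "mtrace M = (\<Sum>i<dim_row M. M $$ (i, i))"

definition psd_mat :: "nat \<Rightarrow> real mat \<Rightarrow> bool" where
  "psd_mat n M \<longleftrightarrow> M \<in> carrier_mat n n \<and> transpose_mat M = M \<and>
     (\<forall>x \<in> carrier_vec n. 0 \<le> x \<bullet> (M *\<^sub>v x))"

definition pd_mat :: "nat \<Rightarrow> real mat \<Rightarrow> bool" where
  "pd_mat n M \<longleftrightarrow> M \<in> carrier_mat n n \<and> transpose_mat M = M \<and>
     (\<forall>x \<in> carrier_vec n. x \<noteq> 0\<^sub>v n \<longrightarrow> 0 < x \<bullet> (M *\<^sub>v x))"

(* R plays the role of A^{1/2}, the positive-semidefinite square root of A *)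
definition muA :: "real mat \<Rightarrow> real vec \<Rightarrow> real vec \<Rightarrow> real vec" where
  "muA R mu1 mu2 = R *\<^sub>v (mu1 - mu2)"

definition SigA :: "real mat \<Rightarrow> real mat \<Rightarrow> real mat" where
  "SigA R S = R * S * R"

definition Delta :: "real mat \<Rightarrow> real vec \<Rightarrow> real vec \<Rightarrow> real" where
  "Delta R mu1 mu2 = muA R mu1 mu2 \<bullet> muA R mu1 mu2"

definition K1 :: "real mat \<Rightarrow> real mat \<Rightarrow> real mat \<Rightarrow> nat \<Rightarrow> nat \<Rightarrow> real" where
  "K1 R S1 S2 n1 n2 =
     2 * (mtrace (SigA R S1 * SigA R S1) / (real n1 * (real n1 - 1))
        + mtrace (SigA R S2 * SigA R S2) / (real n2 * (real n2 - 1)))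
     + 4 * mtrace (SigA R S1 * SigA R S2) / (real n1 * real n2)"

definition K2 :: "real mat \<Rightarrow> real mat \<Rightarrow> real mat \<Rightarrow> real vec \<Rightarrow> real vec \<Rightarrow> nat \<Rightarrow> nat \<Rightarrow> real" where
  "K2 R S1 S2 mu1 mu2 n1 n2 =
     4 * ((muA R mu1 mu2 \<bullet> (SigA R S1 *\<^sub>v muA R mu1 mu2)) / real n1
        + (muA R mu1 mu2 \<bullet> (SigA R S2 *\<^sub>v muA R mu1 mu2)) / real n2)"

end

theory Submission
  imports Defs "HOL-Analysis.Convex"
begin

text \<open>Put \<open>C = \<Sigma>\<^sub>1\<^sub>A / n\<^sub>1 + \<Sigma>\<^sub>2\<^sub>A / n\<^sub>2\<close>, so that \<open>K\<^sub>2 = 4 \<mu>\<^sub>A\<^sup>T C \<mu>\<^sub>A\<close>.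
  Cauchy-Schwarz gives \<open>(\<mu>\<^sub>A\<^sup>T C \<mu>\<^sub>A)\<^sup>2 \<le> \<parallel>C\<parallel>\<^sub>F\<^sup>2 \<Delta>\<^sup>2\<close>, and \<open>1/n\<^sup>2 \<le> 1/(n(n-1))\<close> gives
  \<open>2 \<parallel>C\<parallel>\<^sub>F\<^sup>2 \<le> K\<^sub>1\<close>. Hence \<open>K\<^sub>2\<^sup>2 \<le> 8 K\<^sub>1 \<Delta>\<^sup>2\<close>, i.e. \<open>K\<^sub>1/\<Delta>\<^sup>2 \<le> 8 (K\<^sub>1/K\<^sub>2)\<^sup>2\<close> for every
  \<open>p, n\<^sub>1, n\<^sub>2\<close> separately.\<close>

definition frobenius_inner :: "real mat \<Rightarrow> real mat \<Rightarrow> real" where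
  "frobenius_inner P Q = (\<Sum>i<dim_row P. \<Sum>j<dim_col P. P $$ (i, j) * Q $$ (i, j))"

lemma frobenius_inner_self_nonneg: "0 \<le> frobenius_inner M M"
  unfolding frobenius_inner_def by (intro sum_nonneg) auto

lemma frobenius_inner_lincomb:
  assumes P: "P \<in> carrier_mat n m" and Q: "Q \<in> carrier_mat n m"
  shows "frobenius_inner (a \<cdot>\<^sub>m P + b \<cdot>\<^sub>m Q) (a \<cdot>\<^sub>m P + b \<cdot>\<^sub>m Q)
    = a\<^sup>2 * frobenius_inner P P + 2 * a * b * frobenius_inner P Q + b\<^sup>2 * frobenius_inner Q Q"
  using assms unfolding frobenius_inner_def
  by (simp add: power2_eq_square sum_distrib_left sum.distrib algebra_simps)

lemma mtrace_mult_symmetric: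
  assumes P: "P \<in> carrier_mat n n" and Q: "Q \<in> carrier_mat n n" and Q_sym: "transpose_mat Q = Q"
  shows "mtrace (P * Q) = frobenius_inner P Q"
proof -
  have "Q $$ (j, i) = Q $$ (i, j)" if "i < n" "j < n" for i j
    using that Q Q_sym by (metis carrier_matD index_transpose_mat(1))
  then show ?thesis
    using P Q unfolding mtrace_def frobenius_inner_def
    by (auto simp: scalar_prod_def atLeast0LessThan intro!: sum.cong)
qed

lemma quadratic_form_square_le:
  fixes M :: "real mat"
  assumes M: "M \<in> carrier_mat n n" and x: "x \<in> carrier_vec n"
  shows "(x \<bullet> (M *\<^sub>v x))\<^sup>2 \<le> frobenius_inner M M * (x \<bullet> x)\<^sup>2"
proof -
  define X where "X = (\<Sum>i<n. (x $ i)\<^sup>2)"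
  have X_nonneg: "0 \<le> X" unfolding X_def by (intro sum_nonneg) auto
  have row_bound: "(\<Sum>j<n. M $$ (i, j) * x $ j)\<^sup>2 \<le> (\<Sum>j<n. (M $$ (i, j))\<^sup>2) * X" for i
    unfolding X_def by (rule Cauchy_Schwarz_ineq_sum)
  have "(x \<bullet> (M *\<^sub>v x))\<^sup>2 = (\<Sum>i<n. x $ i * (\<Sum>j<n. M $$ (i, j) * x $ j))\<^sup>2"
    using M x by (simp add: scalar_prod_def atLeast0LessThan)
  also have "\<dots> \<le> X * (\<Sum>i<n. (\<Sum>j<n. M $$ (i, j) * x $ j)\<^sup>2)"
    unfolding X_def by (rule Cauchy_Schwarz_ineq_sum)
  also have "\<dots> \<le> X * (\<Sum>i<n. (\<Sum>j<n. (M $$ (i, j))\<^sup>2) * X)"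
    using X_nonneg by (intro mult_left_mono sum_mono row_bound)
  also have "\<dots> = frobenius_inner M M * X\<^sup>2"
    using M by (simp add: frobenius_inner_def sum_distrib_left sum_distrib_right power2_eq_square
        algebra_simps)
  also have "X = x \<bullet> x"
    using x by (simp add: X_def scalar_prod_def atLeast0LessThan power2_eq_square)
  finally show ?thesis .
qed

lemma quadratic_form_lincomb:
  fixes P Q :: "real mat"
  assumes P: "P \<in> carrier_mat n n" and Q: "Q \<in> carrier_mat n n" and x: "x \<in> carrier_vec n"
  shows "x \<bullet> ((a \<cdot>\<^sub>m P + b \<cdot>\<^sub>m Q) *\<^sub>v x) = a * (x \<bullet> (P *\<^sub>v x)) + b * (x \<bullet> (Q *\<^sub>v x))"
proof -
  have "(a \<cdot>\<^sub>m P + b \<cdot>\<^sub>m Q) *\<^sub>v x = a \<cdot>\<^sub>v (P *\<^sub>v x) + b \<cdot>\<^sub>v (Q *\<^sub>v x)"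
    using assms
    by (intro eq_vecI) (auto simp: scalar_prod_def sum.distrib sum_distrib_left ring_distribs mult.assoc)
  then show ?thesis
    using assms by (simp add: scalar_prod_add_distrib[of _ n] carrier_matD carrier_vecD)
qed

lemma symmetric_mult_vec_scalar_prod:
  fixes R :: "real mat"
  assumes R: "R \<in> carrier_mat n n" "transpose_mat R = R"
    and y: "y \<in> carrier_vec n" and z: "z \<in> carrier_vec n"
  shows "(R *\<^sub>v y) \<bullet> z = y \<bullet> (R *\<^sub>v z)"
  using transpose_vec_mult_scalar[OF R(1) z y] R(2) by simp

lemma SigA_carrier: "R \<in> carrier_mat n n \<Longrightarrow> S \<in> carrier_mat n n \<Longrightarrow> SigA R S \<in> carrier_mat n n"
  unfolding SigA_def by simp

lemma SigA_symmetric: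
  fixes R S :: "real mat"
  assumes R: "R \<in> carrier_mat n n" "transpose_mat R = R"
    and S: "S \<in> carrier_mat n n" "transpose_mat S = S"
  shows "transpose_mat (SigA R S) = SigA R S"
proof -
  have "transpose_mat (R * S * R) = transpose_mat R * transpose_mat (R * S)"
    using R S by (intro transpose_mult[of _ n n]) auto
  also have "transpose_mat (R * S) = transpose_mat S * transpose_mat R"
    using R S by (intro transpose_mult[of _ n n]) auto
  finally show ?thesis
    using R S unfolding SigA_def by simp
qed

lemma quadratic_form_SigA:
  fixes R S :: "real mat"
  assumes R: "R \<in> carrier_mat n n" "transpose_mat R = R"
    and S: "S \<in> carrier_mat n n" and x: "x \<in> carrier_vec n"
  shows "x \<bullet> (SigA R S *\<^sub>v x) = (R *\<^sub>v x) \<bullet> (S *\<^sub>v (R *\<^sub>v x))"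
proof -
  have "SigA R S *\<^sub>v x = R *\<^sub>v (S *\<^sub>v (R *\<^sub>v x))"
    using R S x unfolding SigA_def by (metis assoc_mult_mat_vec mult_carrier_mat mult_mat_vec_carrier)
  then show ?thesis
    using R S x by (simp add: symmetric_mult_vec_scalar_prod)
qed

lemma quadratic_form_SigA_pos:
  fixes R S :: "real mat"
  assumes R: "R \<in> carrier_mat n n" "transpose_mat R = R" and S: "pd_mat n S"
    and v: "v \<in> carrier_vec n" and nonzero: "(R *\<^sub>v v) \<bullet> (R *\<^sub>v v) \<noteq> 0"
  shows "0 < (R *\<^sub>v v) \<bullet> (SigA R S *\<^sub>v (R *\<^sub>v v))"
proof -
  define x where "x = R *\<^sub>v v"
  have x: "x \<in> carrier_vec n" using R v unfolding x_def by simp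
  have "R *\<^sub>v x \<noteq> 0\<^sub>v n"
  proof
    assume "R *\<^sub>v x = 0\<^sub>v n"
    then have "x \<bullet> x = 0"
      using symmetric_mult_vec_scalar_prod[OF R v x] v unfolding x_def by simp
    then show False using nonzero unfolding x_def by simp
  qed
  then show ?thesis
    using S R x unfolding pd_mat_def x_def[symmetric] by (simp add: quadratic_form_SigA)
qed

text \<open>The covariance of the difference of the two sample means after the transformation by \<open>A\<^sup>1\<^sup>/\<^sup>2\<close>.\<close>

definition cov_mean_diff :: "real mat \<Rightarrow> real mat \<Rightarrow> real mat \<Rightarrow> nat \<Rightarrow> nat \<Rightarrow> real mat" where
  "cov_mean_diff R S1 S2 n1 n2 = (1 / real n1) \<cdot>\<^sub>m SigA R S1 + (1 / real n2) \<cdot>\<^sub>m SigA R S2"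

lemma K2_eq_quadratic_form:
  fixes R S1 S2 :: "real mat"
  assumes "R \<in> carrier_mat n n" "S1 \<in> carrier_mat n n" "S2 \<in> carrier_mat n n"
    and "mu1 \<in> carrier_vec n" "mu2 \<in> carrier_vec n"
  shows "K2 R S1 S2 mu1 mu2 n1 n2
    = 4 * (muA R mu1 mu2 \<bullet> (cov_mean_diff R S1 S2 n1 n2 *\<^sub>v muA R mu1 mu2))"
  using assms unfolding K2_def cov_mean_diff_def
  by (simp add: quadratic_form_lincomb[of _ n] SigA_carrier muA_def)

lemma inverse_square_le_inverse_falling:
  assumes "2 \<le> n"
  shows "(1 / real n)\<^sup>2 \<le> 1 / (real n * (real n - 1))"
  using assms by (simp add: power2_eq_square divide_simps)

lemma frobenius_cov_mean_diff_le_K1: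
  fixes R S1 S2 :: "real mat"
  assumes R: "R \<in> carrier_mat n n" "transpose_mat R = R"
    and S1: "S1 \<in> carrier_mat n n" "transpose_mat S1 = S1"
    and S2: "S2 \<in> carrier_mat n n" "transpose_mat S2 = S2"
    and n1: "2 \<le> n1" and n2: "2 \<le> n2"
  shows "2 * frobenius_inner (cov_mean_diff R S1 S2 n1 n2) (cov_mean_diff R S1 S2 n1 n2)
    \<le> K1 R S1 S2 n1 n2"
proof -
  define P Q where "P = SigA R S1" and "Q = SigA R S2"
  have P: "P \<in> carrier_mat n n" "transpose_mat P = P"
    using R S1 unfolding P_def by (auto simp: SigA_carrier SigA_symmetric)
  have Q: "Q \<in> carrier_mat n n" "transpose_mat Q = Q"
    using R S2 unfolding Q_def by (auto simp: SigA_carrier SigA_symmetric)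
  have K1_eq: "K1 R S1 S2 n1 n2
      = 2 * (frobenius_inner P P / (real n1 * (real n1 - 1)) + frobenius_inner Q Q / (real n2 * (real n2 - 1)))
        + 4 * frobenius_inner P Q / (real n1 * real n2)"
    unfolding K1_def P_def[symmetric] Q_def[symmetric]
    using P Q by (simp add: mtrace_mult_symmetric)
  have "(1 / real n1)\<^sup>2 * frobenius_inner P P \<le> frobenius_inner P P / (real n1 * (real n1 - 1))"
    using mult_right_mono[OF inverse_square_le_inverse_falling[OF n1] frobenius_inner_self_nonneg]
    by simp
  moreover have "(1 / real n2)\<^sup>2 * frobenius_inner Q Q \<le> frobenius_inner Q Q / (real n2 * (real n2 - 1))"
    using mult_right_mono[OF inverse_square_le_inverse_falling[OF n2] frobenius_inner_self_nonneg]
    by simp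
  ultimately show ?thesis
    unfolding K1_eq cov_mean_diff_def P_def[symmetric] Q_def[symmetric]
    using P Q by (simp add: frobenius_inner_lincomb)
qed

lemma K2_square_le_K1_Delta_square:
  fixes R S1 S2 :: "real mat"
  assumes R: "R \<in> carrier_mat n n" "transpose_mat R = R"
    and S1: "S1 \<in> carrier_mat n n" "transpose_mat S1 = S1"
    and S2: "S2 \<in> carrier_mat n n" "transpose_mat S2 = S2"
    and mu1: "mu1 \<in> carrier_vec n" and mu2: "mu2 \<in> carrier_vec n"
    and n1: "2 \<le> n1" and n2: "2 \<le> n2"
  shows "(K2 R S1 S2 mu1 mu2 n1 n2)\<^sup>2 \<le> 8 * K1 R S1 S2 n1 n2 * (Delta R mu1 mu2)\<^sup>2"
proof -
  define C x where "C = cov_mean_diff R S1 S2 n1 n2" and "x = muA R mu1 mu2"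
  have C: "C \<in> carrier_mat n n"
    using R S1 S2 unfolding C_def cov_mean_diff_def by (simp add: SigA_carrier)
  have x: "x \<in> carrier_vec n"
    using R mu1 mu2 unfolding x_def muA_def by simp
  have "(K2 R S1 S2 mu1 mu2 n1 n2)\<^sup>2 = 16 * (x \<bullet> (C *\<^sub>v x))\<^sup>2"
    using K2_eq_quadratic_form[OF R(1) S1(1) S2(1) mu1 mu2]
    unfolding C_def x_def by (simp add: power2_eq_square)
  also have "\<dots> \<le> 16 * (frobenius_inner C C * (x \<bullet> x)\<^sup>2)"
    using quadratic_form_square_le[OF C x] by simp
  also have "\<dots> \<le> 8 * K1 R S1 S2 n1 n2 * (x \<bullet> x)\<^sup>2"
    using mult_right_mono[OF frobenius_cov_mean_diff_le_K1[OF R S1 S2 n1 n2] zero_le_power2[of "x \<bullet> x"]]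
    unfolding C_def[symmetric] by linarith
  finally show ?thesis
    unfolding Delta_def x_def .
qed

lemma K1_nonneg:
  fixes R S1 S2 :: "real mat"
  assumes "R \<in> carrier_mat n n" "transpose_mat R = R"
    and "S1 \<in> carrier_mat n n" "transpose_mat S1 = S1"
    and "S2 \<in> carrier_mat n n" "transpose_mat S2 = S2"
    and "2 \<le> n1" "2 \<le> n2"
  shows "0 \<le> K1 R S1 S2 n1 n2"
  using frobenius_cov_mean_diff_le_K1[OF assms] frobenius_inner_self_nonneg
  by (meson mult_nonneg_nonneg order_trans zero_le_numeral)

lemma K2_pos:
  fixes R S1 S2 :: "real mat"
  assumes R: "R \<in> carrier_mat n n" "transpose_mat R = R"
    and S1: "pd_mat n S1" and S2: "pd_mat n S2"
    and mu1: "mu1 \<in> carrier_vec n" and mu2: "mu2 \<in> carrier_vec n"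
    and n1: "1 \<le> n1" and n2: "1 \<le> n2"
    and Delta: "Delta R mu1 mu2 \<noteq> 0"
  shows "0 < K2 R S1 S2 mu1 mu2 n1 n2"
proof -
  have mu: "mu1 - mu2 \<in> carrier_vec n" using mu1 mu2 by simp
  have "0 < muA R mu1 mu2 \<bullet> (SigA R S1 *\<^sub>v muA R mu1 mu2)"
    using quadratic_form_SigA_pos[OF R S1 mu] Delta unfolding Delta_def muA_def by simp
  moreover have "0 < muA R mu1 mu2 \<bullet> (SigA R S2 *\<^sub>v muA R mu1 mu2)"
    using quadratic_form_SigA_pos[OF R S2 mu] Delta unfolding Delta_def muA_def by simp
  ultimately show ?thesis
    using n1 n2 unfolding K2_def by (simp add: add_pos_pos)
qed

lemma K1_div_Delta_square_le:
  fixes R S1 S2 :: "real mat"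
  assumes R: "R \<in> carrier_mat n n" "transpose_mat R = R"
    and S1: "pd_mat n S1" and S2: "pd_mat n S2"
    and mu1: "mu1 \<in> carrier_vec n" and mu2: "mu2 \<in> carrier_vec n"
    and n1: "2 \<le> n1" and n2: "2 \<le> n2"
  shows "K1 R S1 S2 n1 n2 / (Delta R mu1 mu2)\<^sup>2
    \<le> 8 * (K1 R S1 S2 n1 n2 / K2 R S1 S2 mu1 mu2 n1 n2)\<^sup>2"
proof (cases "Delta R mu1 mu2 = 0")
  case False
  have S1': "S1 \<in> carrier_mat n n" "transpose_mat S1 = S1"
    and S2': "S2 \<in> carrier_mat n n" "transpose_mat S2 = S2"
    using S1 S2 unfolding pd_mat_def by auto
  define k1 k2 d where "k1 = K1 R S1 S2 n1 n2" and "k2 = K2 R S1 S2 mu1 mu2 n1 n2"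
    and "d = Delta R mu1 mu2"
  have "0 \<le> k1" unfolding k1_def using K1_nonneg[OF R S1' S2' n1 n2] .
  moreover have "0 < k2"
    unfolding k2_def using K2_pos[OF R S1 S2 mu1 mu2 _ _ False] n1 n2 by simp
  moreover have "k2\<^sup>2 \<le> 8 * k1 * d\<^sup>2"
    unfolding k1_def k2_def d_def using K2_square_le_K1_Delta_square[OF R S1' S2' mu1 mu2 n1 n2] .
  ultimately have "k1 * k2\<^sup>2 \<le> 8 * k1\<^sup>2 * d\<^sup>2"
    using mult_left_mono[of "k2\<^sup>2" "8 * k1 * d\<^sup>2" k1] by (simp add: power2_eq_square algebra_simps)
  then show ?thesis
    using \<open>0 < k2\<close> False unfolding k1_def[symmetric] k2_def[symmetric] d_def[symmetric]
    by (simp add: divide_simps power_divide)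
qed simp

theorem proposition1:
  fixes p n1 n2 :: "nat \<Rightarrow> nat"
    and mu1 mu2 :: "nat \<Rightarrow> real vec"
    and S1 S2 A R :: "nat \<Rightarrow> real mat"
  assumes mu1: "\<And>k. mu1 k \<in> carrier_vec (p k)"
    and mu2: "\<And>k. mu2 k \<in> carrier_vec (p k)"
    and S1: "\<And>k. pd_mat (p k) (S1 k)"
    and S2: "\<And>k. pd_mat (p k) (S2 k)"
    and n1: "\<And>k. n1 k \<ge> 4"
    and n2: "\<And>k. n2 k \<ge> 4"
    and A: "\<And>k. psd_mat (p k) (A k)"
    and R: "\<And>k. psd_mat (p k) (R k) \<and> R k * R k = A k"
    and m: "filterlim (\<lambda>k. min (p k) (min (n1 k) (n2 k))) at_top sequentially"
    and hyp: "(\<lambda>k. K1 (R k) (S1 k) (S2 k) (n1 k) (n2 k)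
                   / K2 (R k) (S1 k) (S2 k) (mu1 k) (mu2 k) (n1 k) (n2 k)) \<longlonglongrightarrow> 0"
  shows "(\<lambda>k. K1 (R k) (S1 k) (S2 k) (n1 k) (n2 k)
                / (Delta (R k) (mu1 k) (mu2 k))\<^sup>2) \<longlonglongrightarrow> 0"
proof -
  have bounds: "0 \<le> K1 (R k) (S1 k) (S2 k) (n1 k) (n2 k) / (Delta (R k) (mu1 k) (mu2 k))\<^sup>2
      \<and> K1 (R k) (S1 k) (S2 k) (n1 k) (n2 k) / (Delta (R k) (mu1 k) (mu2 k))\<^sup>2
        \<le> 8 * (K1 (R k) (S1 k) (S2 k) (n1 k) (n2 k)
               / K2 (R k) (S1 k) (S2 k) (mu1 k) (mu2 k) (n1 k) (n2 k))\<^sup>2" for k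
  proof -
    have R_sym: "R k \<in> carrier_mat (p k) (p k)" "transpose_mat (R k) = R k"
      using R unfolding psd_mat_def by auto
    have S_sym: "S1 k \<in> carrier_mat (p k) (p k)" "transpose_mat (S1 k) = S1 k"
      "S2 k \<in> carrier_mat (p k) (p k)" "transpose_mat (S2 k) = S2 k"
      using S1 S2 unfolding pd_mat_def by auto
    have n: "2 \<le> n1 k" "2 \<le> n2 k" using n1[of k] n2[of k] by linarith+
    show ?thesis
      using K1_nonneg[OF R_sym S_sym n] K1_div_Delta_square_le[OF R_sym S1 S2 mu1 mu2 n] by simp
  qed
  have limit: "(\<lambda>k. 8 * (K1 (R k) (S1 k) (S2 k) (n1 k) (n2 k)
                   / K2 (R k) (S1 k) (S2 k) (mu1 k) (mu2 k) (n1 k) (n2 k))\<^sup>2) \<longlonglongrightarrow> 0"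
    using tendsto_mult[OF tendsto_const[of 8] tendsto_power[OF hyp, of 2]] by simp
  show ?thesis
    by (rule tendsto_sandwich[OF always_eventually always_eventually tendsto_const limit])
      (use bounds in blast)+
qed

end
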